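(* Let $\alpha\in(0,1)$. If a deterministic algorithm for SSP is $(1+\alpha)$-consistent, then its robustness (on instances with $m$ machines) is at least $1+\frac{1-\alpha}{2\alpha}-O(\frac1m)$, where the $O(\cdot)$ hides a factor depending only on $\alpha$; this holds even when all jobs have equal processing times. In the special case of infinitesimal jobs, the robustness of a deterministic $(1+\alpha)$-consistent algorithm is at least $1+\frac{(1-\alpha)^2}{4\alpha}-O(\frac1m)$.
   Context: Scheduling with Speed Predictions (SSP). An instance consists of $n$ jobs with processing times $p_1,\dots,p_n\ge 0$ and $m$ machines with true speeds $s_1,\dots,s_m>0$; processing job $j$ on machine $i$ takes time $p_j/s_i$. For a bag (set of jobs) $B$, $p(B)=\sum_{j\in B}p_j$. In the partitioning stage the algorithm receives $\mathbf p$ and predicted speeds $\hat{\mathbf s}\ge 0$ (not $\mathbf s$) and partitions the jobs into $m$ possibly empty bags. In the scheduling stage $\mathbf s$ is revealed and each bag is assigned whole to a machine; the makespan is the maximum over machines $i$ of (total processing time assigned to $i$)$/s_i$. $opt(\mathbf p,\mathbf s)$ is the minimum makespan of assigning individual jobs knowing $\mathbf s$; $alg(\mathbf p,\hat{\mathbf s},\mathbf s)$ is the algorithm's makespan. An algorithm is $c$-consistent if $alg(\mathbf p,\mathbf s,\mathbf s)\le c\cdot opt(\mathbf p,\mathbf s)$ for all $\mathbf p,\mathbf s$; its robustness is $\sup_{\mathbf p,\hat{\mathbf s},\mathbf s} alg(\mathbf p,\hat{\mathbf s},\mathbf s)/opt(\mathbf p,\mathbf s)$. In the infinitesimal-jobs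 case, jobs are infinitesimally small, so the total load can be divided in the partitioning stage into $m$ bags of arbitrary (real, nonnegative) total processing times summing to the total load. *)

theory Defs
  imports Complex_Main "HOL-Library.FuncSet" "HOL-Library.Extended_Real"
begin

text \<open>Machines are indexed by {..<m}, jobs by {..<n}.
  Processing times p, true speeds s and predicted speeds sh are functions nat => real
  (only the entries below n resp. m are meaningful).\<close>

definition makespan :: "nat \<Rightarrow> nat \<Rightarrow> (nat \<Rightarrow> real) \<Rightarrow> (nat \<Rightarrow> real) \<Rightarrow> (nat \<Rightarrow> nat) \<Rightarrow> real" where
  "makespan m n p s f = Max ((\<lambda>i. (\<Sum>j\<in>{j. j < n \<and> f j = i}. p j) / s i) ` {..<m})"

definition opt :: "nat \<Rightarrow> nat \<Rightarrow> (nat \<Rightarrow> real) \<Rightarrow> (nat \<Rightarrow> real) \<Rightarrow> real" where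
  "opt m n p s = Min (makespan m n p s ` ({..<n} \<rightarrow>\<^sub>E {..<m}))"

text \<open>A deterministic SSP algorithm on m machines is a pair (part, sched):
  part n p sh j is the bag (in {..<m}) of job j, computed from p and the predicted speeds sh only;
  sched n p sh s b is the machine (in {..<m}) receiving bag b, computed once s is revealed.\<close>
definition valid_alg :: "nat \<Rightarrow> (nat \<Rightarrow> (nat \<Rightarrow> real) \<Rightarrow> (nat \<Rightarrow> real) \<Rightarrow> nat \<Rightarrow> nat)
    \<Rightarrow> (nat \<Rightarrow> (nat \<Rightarrow> real) \<Rightarrow> (nat \<Rightarrow> real) \<Rightarrow> (nat \<Rightarrow> real) \<Rightarrow> nat \<Rightarrow> nat) \<Rightarrow> bool" where
  "valid_alg m part sched \<longleftrightarrow>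
     (\<forall>n p sh j. j < n \<longrightarrow> part n p sh j < m) \<and>
     (\<forall>n p sh s b. b < m \<longrightarrow> sched n p sh s b < m)"

definition alg :: "nat \<Rightarrow> (nat \<Rightarrow> (nat \<Rightarrow> real) \<Rightarrow> (nat \<Rightarrow> real) \<Rightarrow> nat \<Rightarrow> nat)
    \<Rightarrow> (nat \<Rightarrow> (nat \<Rightarrow> real) \<Rightarrow> (nat \<Rightarrow> real) \<Rightarrow> (nat \<Rightarrow> real) \<Rightarrow> nat \<Rightarrow> nat)
    \<Rightarrow> nat \<Rightarrow> (nat \<Rightarrow> real) \<Rightarrow> (nat \<Rightarrow> real) \<Rightarrow> (nat \<Rightarrow> real) \<Rightarrow> real" where
  "alg m part sched n p sh s = makespan m n p s (\<lambda>j. sched n p sh s (part n p sh j))"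

definition valid_instance :: "nat \<Rightarrow> nat \<Rightarrow> (nat \<Rightarrow> real) \<Rightarrow> (nat \<Rightarrow> real) \<Rightarrow> bool" where
  "valid_instance m n p s \<longleftrightarrow> (\<forall>j<n. p j \<ge> 0) \<and> (\<forall>i<m. s i > 0)"

definition consistent :: "nat \<Rightarrow> real \<Rightarrow> (nat \<Rightarrow> (nat \<Rightarrow> real) \<Rightarrow> (nat \<Rightarrow> real) \<Rightarrow> nat \<Rightarrow> nat)
    \<Rightarrow> (nat \<Rightarrow> (nat \<Rightarrow> real) \<Rightarrow> (nat \<Rightarrow> real) \<Rightarrow> (nat \<Rightarrow> real) \<Rightarrow> nat \<Rightarrow> nat) \<Rightarrow> bool" where
  "consistent m c part sched \<longleftrightarrow>
     (\<forall>n p s. valid_instance m n p s \<longrightarrow> alg m part sched n p s s \<le> c * opt m n p s)"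

definition robustness_eq :: "nat \<Rightarrow> (nat \<Rightarrow> (nat \<Rightarrow> real) \<Rightarrow> (nat \<Rightarrow> real) \<Rightarrow> nat \<Rightarrow> nat)
    \<Rightarrow> (nat \<Rightarrow> (nat \<Rightarrow> real) \<Rightarrow> (nat \<Rightarrow> real) \<Rightarrow> (nat \<Rightarrow> real) \<Rightarrow> nat \<Rightarrow> nat) \<Rightarrow> ereal" where
  "robustness_eq m part sched =
     (SUP (n, p, sh, s) \<in> {(n, p, sh, s). valid_instance m n p s \<and> (\<forall>i<m. sh i \<ge> 0)
                             \<and> (\<exists>c. \<forall>j<n. p j = c) \<and> opt m n p s > 0}.
        ereal (alg m part sched n p sh s / opt m n p s))"

text \<open>Infinitesimal jobs. Total load L; the partition stage chooses bag sizes
  part L sh b (b < m), nonnegative and summing to L; sched L sh s b is the machine of bag b.\<close>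
definition valid_alg_inf :: "nat \<Rightarrow> (real \<Rightarrow> (nat \<Rightarrow> real) \<Rightarrow> nat \<Rightarrow> real)
    \<Rightarrow> (real \<Rightarrow> (nat \<Rightarrow> real) \<Rightarrow> (nat \<Rightarrow> real) \<Rightarrow> nat \<Rightarrow> nat) \<Rightarrow> bool" where
  "valid_alg_inf m part sched \<longleftrightarrow>
     (\<forall>L sh. L \<ge> 0 \<longrightarrow> (\<forall>b<m. part L sh b \<ge> 0) \<and> (\<Sum>b<m. part L sh b) = L) \<and>
     (\<forall>L sh s b. b < m \<longrightarrow> sched L sh s b < m)"

text \<open>Optimal makespan with infinitesimal jobs (load split proportionally to speeds).\<close>
definition opt_inf :: "nat \<Rightarrow> real \<Rightarrow> (nat \<Rightarrow> real) \<Rightarrow> real" where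
  "opt_inf m L s = L / (\<Sum>i<m. s i)"

definition alg_inf :: "nat \<Rightarrow> (real \<Rightarrow> (nat \<Rightarrow> real) \<Rightarrow> nat \<Rightarrow> real)
    \<Rightarrow> (real \<Rightarrow> (nat \<Rightarrow> real) \<Rightarrow> (nat \<Rightarrow> real) \<Rightarrow> nat \<Rightarrow> nat)
    \<Rightarrow> real \<Rightarrow> (nat \<Rightarrow> real) \<Rightarrow> (nat \<Rightarrow> real) \<Rightarrow> real" where
  "alg_inf m part sched L sh s =
     Max ((\<lambda>i. (\<Sum>b\<in>{b. b < m \<and> sched L sh s b = i}. part L sh b) / s i) ` {..<m})"

definition consistent_inf :: "nat \<Rightarrow> real \<Rightarrow> (real \<Rightarrow> (nat \<Rightarrow> real) \<Rightarrow> nat \<Rightarrow> real)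
    \<Rightarrow> (real \<Rightarrow> (nat \<Rightarrow> real) \<Rightarrow> (nat \<Rightarrow> real) \<Rightarrow> nat \<Rightarrow> nat) \<Rightarrow> bool" where
  "consistent_inf m c part sched \<longleftrightarrow>
     (\<forall>L s. L \<ge> 0 \<and> (\<forall>i<m. s i > 0) \<longrightarrow> alg_inf m part sched L s s \<le> c * opt_inf m L s)"

definition robustness_inf :: "nat \<Rightarrow> (real \<Rightarrow> (nat \<Rightarrow> real) \<Rightarrow> nat \<Rightarrow> real)
    \<Rightarrow> (real \<Rightarrow> (nat \<Rightarrow> real) \<Rightarrow> (nat \<Rightarrow> real) \<Rightarrow> nat \<Rightarrow> nat) \<Rightarrow> ereal" where
  "robustness_inf m part sched =
     (SUP (L, sh, s) \<in> {(L, sh, s). L > 0 \<and> (\<forall>i<m. sh i \<ge> 0) \<and> (\<forall>i<m. s i > 0)}.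
        ereal (alg_inf m part sched L sh s / opt_inf m L s))"

end

theory Submission
  imports Defs
begin

text \<open>
  Predict the speeds (m, 1, ..., 1). Then 2m - 1 unit jobs (or a load 2m - 1 of infinitesimal
  jobs) can be scheduled with makespan 1, so the bags of a (1 + \<alpha>)-consistent algorithm fit
  with makespan 1 + \<alpha> under these speeds: every bag sent to a slow machine has load at most
  1 + \<alpha> (hence at most one unit job), and the fast machine receives load at most (1 + \<alpha>) m.
  A counting argument then shows that few bags go to the fast machine and one of them is heavy,
  of load about (1 + \<alpha>) / \<alpha> for unit jobs and (1 + \<alpha>)^2 / (2 \<alpha>) for infinitesimal jobs.
  If in truth all speeds are 1, this bag alone forces such a makespan, while the optimum is at most 2.
\<close>

lemma max_weight_lower_bound:
  fixes w :: "'a \<Rightarrow> real"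
  assumes "finite I" "I \<noteq> {}" "A \<subseteq> I" "0 \<le> c"
    and total: "(\<Sum>b\<in>I. w b) = L" and capped_part: "(\<Sum>b\<in>A. w b) \<le> D"
    and light: "\<And>b. b \<in> I - A \<Longrightarrow> w b \<le> c" and bounded: "\<And>b. b \<in> I \<Longrightarrow> w b \<le> M"
    and total_exceeds: "real (card I) * c \<le> L"
  shows "c * D \<le> M * (real (card I) * c - L + D)"
proof -
  \<comment> \<open>With k = |A|: the weights in A must make up L - (|I| - k) c \<le> k M, while their cap D
    forces k c \<le> |I| c - L + D; eliminating k gives the claim.\<close>
  define k where "k = real (card A)"
  have card_rest: "real (card (I - A)) = real (card I) - k"
    using assms(1,3) by (simp add: k_def card_Diff_subset finite_subset of_nat_diff card_mono)
  have split: "L = (\<Sum>b\<in>A. w b) + (\<Sum>b\<in>I - A. w b)"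
    using assms(1,3) total by (metis sum.subset_diff add.commute)
  have rest: "(\<Sum>b\<in>I - A. w b) \<le> (real (card I) - k) * c"
    using sum_mono[of "I - A" w "\<lambda>_. c"] light card_rest by simp
  have on_A: "(\<Sum>b\<in>A. w b) \<le> k * M"
    using sum_mono[of A w "\<lambda>_. M"] bounded assms(3) by (auto simp: k_def)
  have "c \<le> M"
  proof -
    have "real (card I) * c \<le> real (card I) * M"
      using sum_mono[of I w "\<lambda>_. M"] bounded total total_exceeds by simp
    moreover have "0 < real (card I)"
      using assms(1,2) by (simp add: card_gt_0_iff)
    ultimately show ?thesis by simp
  qed
  have "k * c \<le> real (card I) * c - L + D"
    using split rest capped_part by (simp add: algebra_simps)
  then have "(M - c) * (k * c) \<le> (M - c) * (real (card I) * c - L + D)"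
    using \<open>c \<le> M\<close> by (intro mult_left_mono) auto
  moreover have "c * (L - real (card I) * c) \<le> c * (k * (M - c))"
    using split rest on_A \<open>0 \<le> c\<close> by (intro mult_left_mono) (auto simp: algebra_simps)
  ultimately show ?thesis by (simp add: algebra_simps)
qed

lemma sub_div_le_div_add_one:
  fixes a \<beta> x :: real
  assumes "0 \<le> a" "0 < \<beta>" "0 < x"
  shows "a / \<beta> - a / (\<beta>\<^sup>2 * x) \<le> a * x / (\<beta> * x + 1)"
proof -
  have "(\<beta> * x - 1) * (\<beta> * x + 1) \<le> x * (\<beta>\<^sup>2 * x)"
    by (simp add: algebra_simps power2_eq_square)
  then have "(\<beta> * x - 1) / (\<beta>\<^sup>2 * x) \<le> x / (\<beta> * x + 1)"
    using assms by (simp add: divide_simps add_pos_pos)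
  then have "a * ((\<beta> * x - 1) / (\<beta>\<^sup>2 * x)) \<le> a * (x / (\<beta> * x + 1))"
    using assms(1) by (rule mult_left_mono)
  moreover have "a / \<beta> - a / (\<beta>\<^sup>2 * x) = a * ((\<beta> * x - 1) / (\<beta>\<^sup>2 * x))"
    using assms by (simp add: field_simps power2_eq_square)
  ultimately show ?thesis by simp
qed

lemma unit_jobs_bound_arith:
  fixes \<alpha> x M :: real
  assumes "0 < \<alpha>" "0 < x" "(1 + \<alpha>) * x \<le> M * (\<alpha> * x + 1)"
  shows "1 + (1 - \<alpha>) / (2 * \<alpha>) - (1 + \<alpha>) / (2 * \<alpha>\<^sup>2) / x \<le> M / 2"
proof -
  have "1 + (1 - \<alpha>) / (2 * \<alpha>) - (1 + \<alpha>) / (2 * \<alpha>\<^sup>2) / x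
      = ((1 + \<alpha>) / \<alpha> - (1 + \<alpha>) / (\<alpha>\<^sup>2 * x)) / 2"
    using assms by (simp add: field_simps power2_eq_square)
  also have "\<dots> \<le> (1 + \<alpha>) * x / (\<alpha> * x + 1) / 2"
    using assms by (intro divide_right_mono sub_div_le_div_add_one) auto
  also have "\<dots> \<le> M / 2"
    using assms by (intro divide_right_mono) (simp_all add: pos_divide_le_eq add_pos_pos)
  finally show ?thesis .
qed

lemma infinitesimal_jobs_bound_arith:
  fixes \<alpha> x M :: real
  assumes "0 < \<alpha>" "\<alpha> < 1" "0 < x" "0 \<le> M"
    and "1 \<le> x * (1 - \<alpha>) \<Longrightarrow> (1 + \<alpha>)\<^sup>2 * x \<le> M * (2 * \<alpha> * x + 1)"
  shows "1 + (1 - \<alpha>)\<^sup>2 / (4 * \<alpha>) - (1 + \<alpha>)\<^sup>2 / (4 * \<alpha>\<^sup>2 * (1 - \<alpha>)) / x \<le> M / 2"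
proof -
  have base: "1 + (1 - \<alpha>)\<^sup>2 / (4 * \<alpha>) = (1 + \<alpha>)\<^sup>2 / (4 * \<alpha>)"
    using assms by (simp add: field_simps power2_eq_square)
  have bound_div_x: "(1 + \<alpha>)\<^sup>2 / (4 * \<alpha>\<^sup>2 * (1 - \<alpha>)) / x = (1 + \<alpha>)\<^sup>2 / (4 * \<alpha>\<^sup>2 * (1 - \<alpha>) * x)"
    by simp
  show ?thesis
  proof (cases "1 \<le> x * (1 - \<alpha>)")
    case False
    then have "\<alpha> * (\<alpha> * (x * (1 - \<alpha>))) \<le> \<alpha> * 1"
      using assms mult_le_one[of \<alpha> "x * (1 - \<alpha>)"] by (intro mult_left_mono) auto
    then have "4 * \<alpha>\<^sup>2 * (1 - \<alpha>) * x \<le> 4 * \<alpha>"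
      by (simp add: power2_eq_square algebra_simps)
    then have "(1 + \<alpha>)\<^sup>2 / (4 * \<alpha>) \<le> (1 + \<alpha>)\<^sup>2 / (4 * \<alpha>\<^sup>2 * (1 - \<alpha>) * x)"
      using assms by (intro divide_left_mono) auto
    then show ?thesis
      using base bound_div_x assms(4) by linarith
  next
    case True
    have "\<alpha>\<^sup>2 * x * (1 - \<alpha>) \<le> \<alpha>\<^sup>2 * x * 2"
      using assms by (intro mult_left_mono) auto
    then have "(1 + \<alpha>)\<^sup>2 / (8 * \<alpha>\<^sup>2 * x) \<le> (1 + \<alpha>)\<^sup>2 / (4 * \<alpha>\<^sup>2 * (1 - \<alpha>) * x)"
      using assms by (intro divide_left_mono) (auto simp: algebra_simps)
    moreover have "(1 + \<alpha>)\<^sup>2 / (4 * \<alpha>) - (1 + \<alpha>)\<^sup>2 / (8 * \<alpha>\<^sup>2 * x)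
        = ((1 + \<alpha>)\<^sup>2 / (2 * \<alpha>) - (1 + \<alpha>)\<^sup>2 / ((2 * \<alpha>)\<^sup>2 * x)) / 2"
      by (simp add: power2_eq_square)
    ultimately have "(1 + \<alpha>)\<^sup>2 / (4 * \<alpha>) - (1 + \<alpha>)\<^sup>2 / (4 * \<alpha>\<^sup>2 * (1 - \<alpha>)) / x
        \<le> ((1 + \<alpha>)\<^sup>2 / (2 * \<alpha>) - (1 + \<alpha>)\<^sup>2 / ((2 * \<alpha>)\<^sup>2 * x)) / 2"
      using bound_div_x by linarith
    also have "\<dots> \<le> (1 + \<alpha>)\<^sup>2 * x / (2 * \<alpha> * x + 1) / 2"
      using assms by (intro divide_right_mono sub_div_le_div_add_one) auto
    also have "\<dots> \<le> M / 2"
      using assms(1,3) assms(5)[OF True]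
      by (intro divide_right_mono) (simp_all add: pos_divide_le_eq add_pos_pos)
    finally show ?thesis using base by simp
  qed
qed

definition bag_makespan :: "nat \<Rightarrow> (nat \<Rightarrow> real) \<Rightarrow> (nat \<Rightarrow> real) \<Rightarrow> (nat \<Rightarrow> nat) \<Rightarrow> real" where
  "bag_makespan m w s \<sigma> = Max ((\<lambda>i. (\<Sum>b\<in>{b. b < m \<and> \<sigma> b = i}. w b) / s i) ` {..<m})"

lemma machine_load_le_bag_makespan:
  "i < m \<Longrightarrow> (\<Sum>b\<in>{b. b < m \<and> \<sigma> b = i}. w b) / s i \<le> bag_makespan m w s \<sigma>"
  unfolding bag_makespan_def by (intro Max_ge) auto

lemma weight_le_bag_makespan_unit_speeds:
  assumes "b < m" "\<sigma> b < m" "\<And>b. b < m \<Longrightarrow> 0 \<le> w b"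
  shows "w b \<le> bag_makespan m w (\<lambda>_. 1) \<sigma>"
proof -
  have "w b \<le> (\<Sum>b'\<in>{b'. b' < m \<and> \<sigma> b' = \<sigma> b}. w b')"
    using assms by (intro member_le_sum) auto
  also have "\<dots> \<le> bag_makespan m w (\<lambda>_. 1) \<sigma>"
    using machine_load_le_bag_makespan[where i="\<sigma> b" and s="\<lambda>_. 1"] assms(2) by simp
  finally show ?thesis .
qed

definition skewed_speeds :: "nat \<Rightarrow> nat \<Rightarrow> real" where
  "skewed_speeds m i = (if i = 0 then real m else 1)"

lemma sum_skewed_speeds:
  assumes "1 \<le> m"
  shows "(\<Sum>i<m. skewed_speeds m i) = 2 * real m - 1"
proof -
  obtain m' where m: "m = Suc m'" using assms by (cases m) auto
  show ?thesis unfolding m by (subst sum.lessThan_Suc_shift) (simp add: skewed_speeds_def)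
qed

lemma
  assumes "bag_makespan m w (skewed_speeds m) \<sigma> \<le> c"
    and "\<And>b. b < m \<Longrightarrow> \<sigma> b < m" and "\<And>b. b < m \<Longrightarrow> 0 \<le> w b"
  shows weight_le_bag_makespan_skewed_speeds: "\<And>b. b < m \<Longrightarrow> \<sigma> b \<noteq> 0 \<Longrightarrow> w b \<le> c"
    and fast_machine_load_le_bag_makespan: "(\<Sum>b\<in>{b. b < m \<and> \<sigma> b = 0}. w b) \<le> c * real m"
proof -
  fix b assume b: "b < m" "\<sigma> b \<noteq> 0"
  have "w b \<le> (\<Sum>b'\<in>{b'. b' < m \<and> \<sigma> b' = \<sigma> b}. w b')"
    using assms(3) b by (intro member_le_sum) auto
  also have "\<dots> \<le> bag_makespan m w (skewed_speeds m) \<sigma>"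
    using machine_load_le_bag_makespan[where i="\<sigma> b" and s="skewed_speeds m"] assms(2) b
    by (simp add: skewed_speeds_def)
  finally show "w b \<le> c" using assms(1) by linarith
next
  show "(\<Sum>b\<in>{b. b < m \<and> \<sigma> b = 0}. w b) \<le> c * real m"
  proof (cases "m = 0")
    case False
    then have "(\<Sum>b\<in>{b. b < m \<and> \<sigma> b = 0}. w b) / skewed_speeds m 0
        \<le> bag_makespan m w (skewed_speeds m) \<sigma>"
      by (intro machine_load_le_bag_makespan) simp
    then have "(\<Sum>b\<in>{b. b < m \<and> \<sigma> b = 0}. w b) / real m \<le> c"
      using assms(1) by (simp add: skewed_speeds_def)
    with False show ?thesis by (simp add: divide_le_eq mult.commute)
  qed simp
qed

lemma load_le_makespan:
  "i < m \<Longrightarrow> (\<Sum>j\<in>{j. j < n \<and> f j = i}. p j) / s i \<le> makespan m n p s f"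
  unfolding makespan_def by (intro Max_ge) auto

lemma makespan_le:
  assumes "0 < m" "\<And>i. i < m \<Longrightarrow> (\<Sum>j\<in>{j. j < n \<and> f j = i}. p j) / s i \<le> c"
  shows "makespan m n p s f \<le> c"
  using assms unfolding makespan_def by (subst Max_le_iff) auto

lemma opt_le_makespan:
  "f \<in> {..<n} \<rightarrow>\<^sub>E {..<m} \<Longrightarrow> opt m n p s \<le> makespan m n p s f"
  unfolding opt_def by (intro Min_le) (auto simp: finite_PiE)

lemma le_opt:
  assumes "0 < m" "\<And>f. f \<in> {..<n} \<rightarrow>\<^sub>E {..<m} \<Longrightarrow> c \<le> makespan m n p s f"
  shows "c \<le> opt m n p s"
proof -
  have "(\<lambda>j. if j < n then 0 else undefined) \<in> {..<n} \<rightarrow>\<^sub>E {..<m}"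
    using assms(1) by (auto simp: PiE_def extensional_def)
  then show ?thesis
    unfolding opt_def using assms by (subst Min_ge_iff) (auto simp: finite_PiE)
qed

lemma opt_unit_jobs_skewed_speeds:
  assumes "1 \<le> m"
  shows "opt m (2 * m - 1) (\<lambda>_. 1) (skewed_speeds m) \<le> 1"
proof -
  define f where "f j = (if j < 2 * m - 1 then (if j < m then 0 else j - m + 1) else undefined)" for j
  have "f \<in> {..<2 * m - 1} \<rightarrow>\<^sub>E {..<m}"
    using assms by (auto simp: f_def PiE_def extensional_def)
  moreover have "makespan m (2 * m - 1) (\<lambda>_. 1) (skewed_speeds m) f \<le> 1"
  proof (rule makespan_le)
    fix i assume "i < m"
    show "(\<Sum>j\<in>{j. j < 2 * m - 1 \<and> f j = i}. 1) / skewed_speeds m i \<le> 1"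
    proof (cases "i = 0")
      case True
      then have "{j. j < 2 * m - 1 \<and> f j = i} = {..<m}"
        using assms by (auto simp: f_def)
      with True show ?thesis by (simp add: skewed_speeds_def)
    next
      case False
      then have "{j. j < 2 * m - 1 \<and> f j = i} \<subseteq> {i + m - 1}"
        by (auto simp: f_def)
      then have "card {j. j < 2 * m - 1 \<and> f j = i} \<le> card {i + m - 1}"
        by (intro card_mono) auto
      with False show ?thesis by (simp add: skewed_speeds_def)
    qed
  qed (use assms in simp)
  ultimately show ?thesis
    using opt_le_makespan by (blast intro: order_trans)
qed

lemma opt_unit_jobs_unit_speeds:
  assumes "1 \<le> n" "n \<le> 2 * m"
  shows "1 \<le> opt m n (\<lambda>_. 1) (\<lambda>_. 1)" and "opt m n (\<lambda>_. 1) (\<lambda>_. 1) \<le> 2"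
proof -
  have "0 < m" using assms by simp
  show "1 \<le> opt m n (\<lambda>_. 1) (\<lambda>_. 1)"
  proof (rule le_opt[OF \<open>0 < m\<close>])
    fix f assume f: "f \<in> {..<n} \<rightarrow>\<^sub>E {..<m}"
    have "f 0 < m" using PiE_mem[OF f, of 0] assms(1) by simp
    have "0 \<in> {j. j < n \<and> f j = f 0}" using assms(1) by simp
    then have "0 < card {j. j < n \<and> f j = f 0}"
      by (subst card_gt_0_iff) auto
    then have "1 \<le> (\<Sum>j\<in>{j. j < n \<and> f j = f 0}. 1::real) / 1" by simp
    also have "\<dots> \<le> makespan m n (\<lambda>_. 1) (\<lambda>_. 1) f"
      by (rule load_le_makespan[OF \<open>f 0 < m\<close>])
    finally show "1 \<le> makespan m n (\<lambda>_. 1) (\<lambda>_. 1) f" .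
  qed
  define f where "f j = (if j < n then j div 2 else undefined)" for j
  have "f \<in> {..<n} \<rightarrow>\<^sub>E {..<m}"
    using assms by (auto simp: f_def PiE_def extensional_def less_mult_imp_div_less)
  moreover have "makespan m n (\<lambda>_. 1) (\<lambda>_. 1) f \<le> 2"
  proof (rule makespan_le[OF \<open>0 < m\<close>])
    fix i
    have "{j. j < n \<and> f j = i} \<subseteq> {2 * i, 2 * i + 1}"
      by (auto simp: f_def)
    then have "card {j. j < n \<and> f j = i} \<le> card {2 * i, 2 * i + 1}"
      by (intro card_mono) auto
    also have "\<dots> \<le> 2"
      by (simp add: card_insert_le_m1)
    finally show "(\<Sum>j\<in>{j. j < n \<and> f j = i}. 1) / 1 \<le> (2::real)" by simp
  qed
  ultimately show "opt m n (\<lambda>_. 1) (\<lambda>_. 1) \<le> 2"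
    using opt_le_makespan by (blast intro: order_trans)
qed

lemma alg_eq_bag_makespan:
  assumes "valid_alg m part sched"
  shows "alg m part sched n p sh s
    = bag_makespan m (\<lambda>b. \<Sum>j\<in>{j. j < n \<and> part n p sh j = b}. p j) s (sched n p sh s)"
proof -
  let ?P = "part n p sh" and ?\<sigma> = "sched n p sh s"
  have "(\<Sum>j\<in>{j. j < n \<and> ?\<sigma> (?P j) = i}. p j)
      = (\<Sum>b\<in>{b. b < m \<and> ?\<sigma> b = i}. \<Sum>j\<in>{j. j < n \<and> ?P j = b}. p j)" for i
  proof -
    have "(\<Sum>j\<in>{j. j < n \<and> ?\<sigma> (?P j) = i}. p j)
        = (\<Sum>b\<in>{b. b < m \<and> ?\<sigma> b = i}. \<Sum>j\<in>{j \<in> {j. j < n \<and> ?\<sigma> (?P j) = i}. ?P j = b}. p j)"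
      using assms by (intro sum.group[symmetric]) (auto simp: valid_alg_def)
    also have "\<dots> = (\<Sum>b\<in>{b. b < m \<and> ?\<sigma> b = i}. \<Sum>j\<in>{j. j < n \<and> ?P j = b}. p j)"
      by (intro sum.cong) auto
    finally show ?thesis .
  qed
  then show ?thesis by (simp add: alg_def makespan_def bag_makespan_def)
qed

lemma sum_bag_loads:
  assumes "valid_alg m part sched"
  shows "(\<Sum>b<m. \<Sum>j\<in>{j. j < n \<and> part n p sh j = b}. p j) = (\<Sum>j<n. p j)"
proof -
  have "part n p sh ` {..<n} \<subseteq> {..<m}"
    using assms by (auto simp: valid_alg_def)
  from sum.group[OF finite_lessThan finite_lessThan this, of p] show ?thesis
    by simp
qed

lemma bag_load_le_alg_unit_speeds:
  assumes "valid_alg m part sched" "b < m" "\<And>j. j < n \<Longrightarrow> 0 \<le> p j"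
  shows "(\<Sum>j\<in>{j. j < n \<and> part n p sh j = b}. p j) \<le> alg m part sched n p sh (\<lambda>_. 1)"
  unfolding alg_eq_bag_makespan[OF assms(1)] using assms
  by (intro weight_le_bag_makespan_unit_speeds) (auto simp: valid_alg_def intro: sum_nonneg)

lemma alg_unit_jobs_skewed_speeds:
  assumes "1 \<le> m" "0 \<le> c" "consistent m c part sched"
  shows "alg m part sched (2 * m - 1) (\<lambda>_. 1) (skewed_speeds m) (skewed_speeds m) \<le> c"
proof -
  have "valid_instance m (2 * m - 1) (\<lambda>_. 1) (skewed_speeds m)"
    using assms(1) by (simp add: valid_instance_def skewed_speeds_def)
  then have "alg m part sched (2 * m - 1) (\<lambda>_. 1) (skewed_speeds m) (skewed_speeds m)
      \<le> c * opt m (2 * m - 1) (\<lambda>_. 1) (skewed_speeds m)"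
    using assms(3) by (simp add: consistent_def)
  also have "\<dots> \<le> c"
    using opt_unit_jobs_skewed_speeds[OF assms(1)] assms(2) by (simp add: mult_left_le)
  finally show ?thesis .
qed

lemma consistent_alg_lower_bound_unit_speeds:
  fixes \<alpha> :: real
  assumes "0 < \<alpha>" "\<alpha> < 1" "1 \<le> m"
    and valid: "valid_alg m part sched" and consistent: "consistent m (1 + \<alpha>) part sched"
  shows "(1 + \<alpha>) * real m
    \<le> alg m part sched (2 * m - 1) (\<lambda>_. 1) (skewed_speeds m) (\<lambda>_. 1) * (\<alpha> * real m + 1)"
proof -
  define n where "n = 2 * m - 1"
  define p :: "nat \<Rightarrow> real" where "p = (\<lambda>_. 1)"
  define sh where "sh = skewed_speeds m"
  define w where "w = (\<lambda>b. \<Sum>j\<in>{j. j < n \<and> part n p sh j = b}. p j)"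
  define \<sigma> where "\<sigma> = sched n p sh sh"
  have w_card: "w b = real (card {j. j < n \<and> part n p sh j = b})" for b
    by (simp add: w_def p_def)
  have "bag_makespan m w sh \<sigma> \<le> 1 + \<alpha>"
    using alg_unit_jobs_skewed_speeds[OF assms(3) _ consistent] assms(1)
    by (simp add: alg_eq_bag_makespan[OF valid] w_def \<sigma>_def n_def p_def sh_def)
  then have fast_machine: "(\<Sum>b\<in>{b. b < m \<and> \<sigma> b = 0}. w b) \<le> (1 + \<alpha>) * real m"
    and light_le: "\<And>b. b < m \<Longrightarrow> \<sigma> b \<noteq> 0 \<Longrightarrow> w b \<le> 1 + \<alpha>"
    using fast_machine_load_le_bag_makespan[of m w \<sigma> "1 + \<alpha>"]
      weight_le_bag_makespan_skewed_speeds[of m w \<sigma> "1 + \<alpha>"] valid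
    by (auto simp: sh_def w_card \<sigma>_def valid_alg_def)
  have light: "w b \<le> 1" if "b < m" "\<sigma> b \<noteq> 0" for b
  proof -
    have "real (card {j. j < n \<and> part n p sh j = b}) < 2"
      using light_le[OF that] assms(2) by (simp add: w_card)
    then show ?thesis by (simp add: w_card)
  qed
  have "(\<Sum>b<m. w b) = (\<Sum>j<n. p j)"
    unfolding w_def by (rule sum_bag_loads[OF valid])
  also have "\<dots> = 2 * real m - 1"
    using assms(3) by (simp add: p_def n_def of_nat_diff)
  finally have total: "(\<Sum>b<m. w b) = 2 * real m - 1" .
  have heavy: "w b \<le> alg m part sched n p sh (\<lambda>_. 1)" if "b < m" for b
    unfolding w_def using valid that by (rule bag_load_le_alg_unit_speeds) (simp add: p_def)
  have "1 * ((1 + \<alpha>) * real m) \<le> alg m part sched n p sh (\<lambda>_. 1)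
      * (real (card {..<m}) * 1 - (2 * real m - 1) + (1 + \<alpha>) * real m)"
    by (rule max_weight_lower_bound[where A="{b. b < m \<and> \<sigma> b = 0}"])
      (use assms(3) fast_machine total light heavy in \<open>auto simp: w_card\<close>)
  then show ?thesis
    by (simp add: n_def p_def sh_def algebra_simps)
qed

lemma robustness_eq_lower_bound:
  fixes \<alpha> :: real
  assumes "0 < \<alpha>" "\<alpha> < 1" "1 \<le> m"
    and "valid_alg m part sched" "consistent m (1 + \<alpha>) part sched"
  shows "ereal (1 + (1 - \<alpha>) / (2 * \<alpha>) - (1 + \<alpha>) / (2 * \<alpha>\<^sup>2) / real m) \<le> robustness_eq m part sched"
proof -
  let ?n = "2 * m - 1" and ?p = "\<lambda>_. 1 :: real" and ?sh = "skewed_speeds m" and ?s = "\<lambda>_. 1 :: real"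
  let ?M = "alg m part sched ?n ?p ?sh ?s"
  have heavy: "(1 + \<alpha>) * real m \<le> ?M * (\<alpha> * real m + 1)"
    by (rule consistent_alg_lower_bound_unit_speeds[OF assms])
  have "0 < \<alpha> * real m + 1" "0 < (1 + \<alpha>) * real m"
    using assms(1,3) by (simp_all add: add_pos_nonneg)
  then have "0 \<le> ?M"
    using heavy zero_less_mult_pos2[of ?M "\<alpha> * real m + 1"] by linarith
  have opt: "1 \<le> opt m ?n ?p ?s" "opt m ?n ?p ?s \<le> 2"
    using opt_unit_jobs_unit_speeds[of ?n m] assms(3) by auto
  have "1 + (1 - \<alpha>) / (2 * \<alpha>) - (1 + \<alpha>) / (2 * \<alpha>\<^sup>2) / real m \<le> ?M / 2"
    using assms(1,3) heavy by (intro unit_jobs_bound_arith) auto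
  also have "\<dots> \<le> ?M / opt m ?n ?p ?s"
    using opt \<open>0 \<le> ?M\<close> by (intro divide_left_mono) auto
  finally have "ereal (1 + (1 - \<alpha>) / (2 * \<alpha>) - (1 + \<alpha>) / (2 * \<alpha>\<^sup>2) / real m)
      \<le> ereal (?M / opt m ?n ?p ?s)" by simp
  also have "\<dots> \<le> robustness_eq m part sched"
  proof -
    have "(?n, ?p, ?sh, ?s) \<in> {(n, p, sh, s). valid_instance m n p s \<and> (\<forall>i<m. sh i \<ge> 0)
        \<and> (\<exists>c. \<forall>j<n. p j = c) \<and> opt m n p s > 0}"
      using opt by (auto simp: valid_instance_def skewed_speeds_def)
    then show ?thesis
      unfolding robustness_eq_def by (rule SUP_upper2) simp
  qed
  finally show ?thesis .
qed

lemma alg_inf_eq_bag_makespan: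
  "alg_inf m part sched L sh s = bag_makespan m (part L sh) s (sched L sh s)"
  by (simp add: alg_inf_def bag_makespan_def)

lemma bag_load_le_alg_inf_unit_speeds:
  assumes "valid_alg_inf m part sched" "0 \<le> L" "b < m"
  shows "part L sh b \<le> alg_inf m part sched L sh (\<lambda>_. 1)"
  unfolding alg_inf_eq_bag_makespan using assms
  by (intro weight_le_bag_makespan_unit_speeds) (auto simp: valid_alg_inf_def)

lemma alg_inf_skewed_speeds:
  assumes "1 \<le> m" "consistent_inf m c part sched"
  shows "alg_inf m part sched (2 * real m - 1) (skewed_speeds m) (skewed_speeds m) \<le> c"
proof -
  have "alg_inf m part sched (2 * real m - 1) (skewed_speeds m) (skewed_speeds m)
      \<le> c * opt_inf m (2 * real m - 1) (skewed_speeds m)"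
    using assms by (simp add: consistent_inf_def skewed_speeds_def)
  also have "opt_inf m (2 * real m - 1) (skewed_speeds m) = 1"
    using assms(1) sum_skewed_speeds[OF assms(1)] by (simp add: opt_inf_def)
  finally show ?thesis by simp
qed

lemma consistent_inf_alg_lower_bound_unit_speeds:
  fixes \<alpha> :: real
  assumes "0 < \<alpha>" "1 \<le> m" "1 \<le> real m * (1 - \<alpha>)"
    and valid: "valid_alg_inf m part sched" and consistent: "consistent_inf m (1 + \<alpha>) part sched"
  shows "(1 + \<alpha>)\<^sup>2 * real m
    \<le> alg_inf m part sched (2 * real m - 1) (skewed_speeds m) (\<lambda>_. 1) * (2 * \<alpha> * real m + 1)"
proof -
  define L where "L = 2 * real m - 1"
  define sh where "sh = skewed_speeds m"
  define w where "w = part L sh"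
  define \<sigma> where "\<sigma> = sched L sh sh"
  have "0 < L" using assms(2) by (simp add: L_def)
  have "bag_makespan m w sh \<sigma> \<le> 1 + \<alpha>"
    using alg_inf_skewed_speeds[OF assms(2) consistent]
    by (simp add: alg_inf_eq_bag_makespan L_def w_def \<sigma>_def sh_def)
  then have fast_machine: "(\<Sum>b\<in>{b. b < m \<and> \<sigma> b = 0}. w b) \<le> (1 + \<alpha>) * real m"
    and light: "\<And>b. b < m \<Longrightarrow> \<sigma> b \<noteq> 0 \<Longrightarrow> w b \<le> 1 + \<alpha>"
    using fast_machine_load_le_bag_makespan[of m w \<sigma> "1 + \<alpha>"]
      weight_le_bag_makespan_skewed_speeds[of m w \<sigma> "1 + \<alpha>"] valid \<open>0 < L\<close>
    by (auto simp: sh_def w_def \<sigma>_def valid_alg_inf_def)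
  have total: "(\<Sum>b<m. w b) = L"
    using valid \<open>0 < L\<close> by (simp add: valid_alg_inf_def w_def)
  have heavy: "w b \<le> alg_inf m part sched L sh (\<lambda>_. 1)" if "b < m" for b
    unfolding w_def using valid \<open>0 < L\<close> that by (intro bag_load_le_alg_inf_unit_speeds) auto
  have "(1 + \<alpha>) * ((1 + \<alpha>) * real m)
      \<le> alg_inf m part sched L sh (\<lambda>_. 1) * (real (card {..<m}) * (1 + \<alpha>) - L + (1 + \<alpha>) * real m)"
    by (rule max_weight_lower_bound[where A="{b. b < m \<and> \<sigma> b = 0}"])
      (use assms fast_machine total light heavy in \<open>auto simp: L_def algebra_simps\<close>)
  then show ?thesis
    by (simp add: L_def sh_def algebra_simps power2_eq_square)
qed

lemma robustness_inf_lower_bound: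
  fixes \<alpha> :: real
  assumes "0 < \<alpha>" "\<alpha> < 1" "1 \<le> m"
    and valid: "valid_alg_inf m part sched" and "consistent_inf m (1 + \<alpha>) part sched"
  shows "ereal (1 + (1 - \<alpha>)\<^sup>2 / (4 * \<alpha>) - (1 + \<alpha>)\<^sup>2 / (4 * \<alpha>\<^sup>2 * (1 - \<alpha>)) / real m)
    \<le> robustness_inf m part sched"
proof -
  let ?L = "2 * real m - 1" and ?sh = "skewed_speeds m" and ?s = "\<lambda>_. 1 :: real"
  let ?M = "alg_inf m part sched ?L ?sh ?s"
  have "0 < ?L" using assms(3) by simp
  have "0 \<le> part ?L ?sh 0"
    using valid \<open>0 < ?L\<close> assms(3) by (simp add: valid_alg_inf_def)
  also have "\<dots> \<le> ?M"
    using valid \<open>0 < ?L\<close> assms(3) by (intro bag_load_le_alg_inf_unit_speeds) auto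
  finally have "0 \<le> ?M" .
  have opt: "opt_inf m ?L ?s = ?L / real m"
    by (simp add: opt_inf_def)
  then have "0 < opt_inf m ?L ?s" "opt_inf m ?L ?s \<le> 2"
    using assms(3) by (simp_all add: pos_divide_le_eq)
  have "1 + (1 - \<alpha>)\<^sup>2 / (4 * \<alpha>) - (1 + \<alpha>)\<^sup>2 / (4 * \<alpha>\<^sup>2 * (1 - \<alpha>)) / real m \<le> ?M / 2"
    using infinitesimal_jobs_bound_arith[OF assms(1,2) _ \<open>0 \<le> ?M\<close>]
      consistent_inf_alg_lower_bound_unit_speeds[OF assms(1,3) _ assms(4,5)] assms(3)
    by simp
  also have "\<dots> \<le> ?M / opt_inf m ?L ?s"
    using \<open>0 < opt_inf m ?L ?s\<close> \<open>opt_inf m ?L ?s \<le> 2\<close> \<open>0 \<le> ?M\<close> by (intro divide_left_mono) auto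
  finally have "ereal (1 + (1 - \<alpha>)\<^sup>2 / (4 * \<alpha>) - (1 + \<alpha>)\<^sup>2 / (4 * \<alpha>\<^sup>2 * (1 - \<alpha>)) / real m)
      \<le> ereal (?M / opt_inf m ?L ?s)" by simp
  also have "\<dots> \<le> robustness_inf m part sched"
  proof -
    have "(?L, ?sh, ?s) \<in> {(L, sh, s). L > 0 \<and> (\<forall>i<m. sh i \<ge> 0) \<and> (\<forall>i<m. s i > 0)}"
      using \<open>0 < ?L\<close> by (auto simp: skewed_speeds_def)
    then show ?thesis
      unfolding robustness_inf_def by (rule SUP_upper2) simp
  qed
  finally show ?thesis .
qed

theorem theorem1:
  fixes \<alpha> :: real
  assumes "0 < \<alpha>" and "\<alpha> < 1"
  shows "(\<exists>C. \<forall>m::nat. \<forall>part sched. m \<ge> 1 \<and> valid_alg m part sched \<and> consistent m (1 + \<alpha>) part sched \<longrightarrow>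
            robustness_eq m part sched \<ge> ereal (1 + (1 - \<alpha>) / (2 * \<alpha>) - C / real m))
       \<and> (\<exists>C. \<forall>m::nat. \<forall>part sched. m \<ge> 1 \<and> valid_alg_inf m part sched \<and> consistent_inf m (1 + \<alpha>) part sched \<longrightarrow>
            robustness_inf m part sched \<ge> ereal (1 + (1 - \<alpha>)\<^sup>2 / (4 * \<alpha>) - C / real m))"
  using robustness_eq_lower_bound[OF assms] robustness_inf_lower_bound[OF assms] by blast

end
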